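(* Let $\delta>0$. Define \[ I^0_\varphi=\inf\Bigl\{\tfrac12\int_0^\varphi\frac{(r'(u)-\lambda_+T_+r(u))^2}{D(u)}du:\ r\in H^1([0,\varphi]),\ r(0)=\delta,\ r(\varphi)=0\Bigr\}, \] \[ I^0_\infty=\inf\Bigl\{\tfrac12\int_0^\infty\frac{(r'(u)-\lambda_+T_+r(u))^2}{D(u)}du:\ r\in H^1_{\rm loc}([0,\infty)),\ r(0)=\delta,\ r(u)\to0\ (u\to\infty)\Bigr\}. \] Then, as $\varphi\to\infty$, \[ I^0_\varphi-I^0_\infty=\frac12\delta^2e^{-2\lambda_+T_+\varphi}\frac{h^{\rm per}(\varphi)}{h^{\rm per}(0)^2}\Bigl[1+\mathcal O\bigl(e^{-2\lambda_+T_+\varphi}\bigr)\Bigr]. \]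
   Context: $\lambda_+,T_+>0$ and $D:\mathbb R\to(0,\infty)$ is continuous, $1$-periodic and bounded away from $0$ (the transversal diffusion coefficient $D_{rr}$ on the unstable orbit). This is the linearisation near the unstable periodic orbit (placed at $r=0$) of the large-deviation problem, where the rate function is approximated by $\frac12\int D\,p_r^2\,d\varphi$ with $p_r=(r'-\lambda_+T_+r)/D$; its minimisers solve $r'=\lambda_+T_+r+D(\varphi)p_r$, $p_r'=-\lambda_+T_+p_r$. Further $h^{\rm per}(\varphi)=\frac{e^{2\lambda_+T_+\varphi}}{1-e^{-2\lambda_+T_+}}\int_\varphi^{\varphi+1}e^{-2\lambda_+T_+u}D(u)\,du$, the periodic solution of $h'=2\lambda_+T_+h-D(\varphi)$. *)

theory Defs
  imports "HOL-Analysis.Analysis" "HOL-Library.Landau_Symbols"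
begin

text \<open>r belongs to H^1([0,a]) with weak derivative g: g is measurable and square
integrable on [0,a], and r is the indefinite integral of g on [0,a].\<close>
definition H1_on :: "real \<Rightarrow> (real \<Rightarrow> real) \<Rightarrow> (real \<Rightarrow> real) \<Rightarrow> bool" where
  "H1_on a r g \<longleftrightarrow> g \<in> borel_measurable lborel
     \<and> set_integrable lborel {0..a} (\<lambda>u. (g u)^2)
     \<and> (\<forall>x\<in>{0..a}. r x = r 0 + (LINT u:{0..x}|lborel. g u))"

definition H1_loc :: "(real \<Rightarrow> real) \<Rightarrow> (real \<Rightarrow> real) \<Rightarrow> bool" where
  "H1_loc r g \<longleftrightarrow> g \<in> borel_measurable lborel
     \<and> (\<forall>a\<ge>0. set_integrable lborel {0..a} (\<lambda>u. (g u)^2))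
     \<and> (\<forall>x\<ge>0. r x = r 0 + (LINT u:{0..x}|lborel. g u))"

definition action :: "real \<Rightarrow> real \<Rightarrow> (real \<Rightarrow> real) \<Rightarrow> real set
     \<Rightarrow> (real \<Rightarrow> real) \<Rightarrow> (real \<Rightarrow> real) \<Rightarrow> ennreal" where
  "action lam T D A r g =
     (\<integral>\<^sup>+ u. ennreal ((g u - lam * T * r u)^2 / D u / 2) * indicator A u \<partial>lborel)"

definition I0_fin :: "real \<Rightarrow> real \<Rightarrow> (real \<Rightarrow> real) \<Rightarrow> real \<Rightarrow> real \<Rightarrow> ennreal" where
  "I0_fin lam T D \<delta> \<phi> =
     (INF rg \<in> {(r, g). H1_on \<phi> r g \<and> r 0 = \<delta> \<and> r \<phi> = 0}.
        action lam T D {0..\<phi>} (fst rg) (snd rg))"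

definition I0_inf :: "real \<Rightarrow> real \<Rightarrow> (real \<Rightarrow> real) \<Rightarrow> real \<Rightarrow> ennreal" where
  "I0_inf lam T D \<delta> =
     (INF rg \<in> {(r, g). H1_loc r g \<and> r 0 = \<delta> \<and> (r \<longlongrightarrow> 0) at_top}.
        action lam T D {0..} (fst rg) (snd rg))"

text \<open>Periodic solution of h' = 2 lam T h - D.\<close>
definition hper :: "real \<Rightarrow> real \<Rightarrow> (real \<Rightarrow> real) \<Rightarrow> real \<Rightarrow> real" where
  "hper lam T D \<phi> = exp (2 * lam * T * \<phi>) / (1 - exp (- 2 * lam * T))
     * integral {\<phi>..\<phi>+1} (\<lambda>u. exp (- 2 * lam * T * u) * D u)"

end

theory Submission
  imports Defs
begin

text \<open>
  Write c = lam T.  Since exp (- c u) (r' - c r) = (exp (- c u) r)', every admissible path on [0, x]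
  satisfies the integral identity exp (- c x) r x - r 0 = int_0^x exp (- c u) (r' - c r) du, and the
  Cauchy-Schwarz inequality with weight D bounds its action below by
  (r 0 - exp (- c x) r x)^2 / (2 G x), where G x = int_0^x exp (- 2 c u) D u du.  The solution of the
  Euler-Lagrange equations attains this bound, so I0_fin = delta^2 / (2 G phi) and
  I0_inf = delta^2 / (2 G infinity).  Periodicity of D makes G infinity - G phi = exp (- 2 c phi) hper phi
  decay exponentially, and expanding 1 / (G infinity - t) to first order in t gives the asymptotics.
\<close>

lemma set_integrable_Icc_if_square_integrable:
  fixes g :: "real \<Rightarrow> real"
  assumes [measurable]: "g \<in> borel_measurable lborel"
    and "set_integrable lborel {a..b} (\<lambda>u. (g u)^2)"
  shows "set_integrable lborel {a..b} g"
proof -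
  interpret finite_measure "restrict_space lborel {a..b}"
    by (intro finite_measureI) (simp add: emeasure_restrict_space emeasure_lborel_Icc_eq)
  have "integrable (restrict_space lborel {a..b}) g"
  proof (rule square_integrable_imp_integrable)
    show "g \<in> borel_measurable (restrict_space lborel {a..b})"
      by (rule measurable_restrict_space1) simp
    show "integrable (restrict_space lborel {a..b}) (\<lambda>u. (g u)^2)"
      using assms(2) unfolding set_integrable_def by (subst integrable_restrict_space) auto
  qed
  then show ?thesis
    by (simp add: set_integrable_def integrable_restrict_space)
qed

lemma nn_integral_ge_integral:
  fixes h :: "'a \<Rightarrow> real"
  assumes "integrable M h"
  shows "ennreal (\<integral>x. h x \<partial>M) \<le> (\<integral>\<^sup>+x. ennreal (h x) \<partial>M)"
proof -
  have pos: "integrable M (\<lambda>x. max 0 (h x))" using assms by (intro integrable_max) auto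
  have "ennreal (\<integral>x. h x \<partial>M) \<le> ennreal (\<integral>x. max 0 (h x) \<partial>M)"
    by (intro ennreal_leI integral_mono assms pos) auto
  also have "\<dots> = (\<integral>\<^sup>+x. ennreal (max 0 (h x)) \<partial>M)"
    using pos by (intro nn_integral_eq_integral[symmetric]) auto
  also have "\<dots> = (\<integral>\<^sup>+x. ennreal (h x) \<partial>M)"
    by (intro nn_integral_cong) (auto simp: max_def ennreal_neg)
  finally show ?thesis .
qed

lemma tendsto_exp_neg_mult_at_top:
  fixes k :: real
  assumes "k > 0"
  shows "((\<lambda>x. exp (-k * x)) \<longlongrightarrow> 0) at_top"
proof -
  have "filterlim (\<lambda>x. (-k) * x) at_bot at_top"
    by (rule filterlim_tendsto_neg_mult_at_bot[OF tendsto_const _ filterlim_ident]) (use assms in simp)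
  then show ?thesis
    by (rule filterlim_compose[OF exp_at_bot])
qed

lemma tendsto_0_if_exp_neg_bound:
  fixes f :: "real \<Rightarrow> real" and k C :: real
  assumes "k > 0" and "\<forall>\<^sub>F x in at_top. 0 \<le> f x \<and> f x \<le> C * exp (-k * x)"
  shows "(f \<longlongrightarrow> 0) at_top"
proof (rule tendsto_sandwich[of "\<lambda>_. 0" _ _ "\<lambda>x. C * exp (-k * x)"])
  show "((\<lambda>x. C * exp (-k * x)) \<longlongrightarrow> 0) at_top"
    using tendsto_mult_left[OF tendsto_exp_neg_mult_at_top[OF assms(1)], of C] by simp
qed (use assms(2) in \<open>auto elim: eventually_mono\<close>)

lemma H1_on_if_H1_loc: "0 \<le> x \<Longrightarrow> H1_loc r g \<Longrightarrow> H1_on x r g"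
  unfolding H1_on_def H1_loc_def by (meson atLeastAtMost_iff)

lemma H1_loc_if_continuous_derivative:
  fixes r g :: "real \<Rightarrow> real"
  assumes r: "\<And>u. (r has_real_derivative g u) (at u)" and g: "continuous_on UNIV g"
  shows "H1_loc r g"
  unfolding H1_loc_def
proof (intro conjI allI impI)
  show "g \<in> borel_measurable lborel"
    using borel_measurable_continuous_onI[OF g] by simp
  show "set_integrable lborel {0..a} (\<lambda>u. (g u)^2)" for a
    by (intro borel_integrable_atLeastAtMost' continuous_intros continuous_on_subset[OF g]) auto
  fix y :: real assume "0 \<le> y"
  have "(LBINT u=(0::real)..y. g u) = r y - r 0"
  proof (rule interval_integral_FTC_finite)
    show "continuous_on {min 0 y..max 0 y} g"
      by (rule continuous_on_subset[OF g]) auto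
    show "(r has_vector_derivative g u) (at u within {min 0 y..max 0 y})" for u
      using r[of u] by (simp add: has_real_derivative_iff_has_vector_derivative[symmetric] has_field_derivative_at_within)
  qed
  then show "r y = r 0 + (LINT u:{0..y}|lborel. g u)"
    using \<open>0 \<le> y\<close> by (simp add: interval_integral_Icc)
qed

lemma set_integral_exp_neg:
  fixes a b c :: real
  assumes "a \<le> b"
  shows "(LINT u:{a..b}|lborel. c * exp (-c * u)) = exp (-c * a) - exp (-c * b)"
proof -
  have "(LINT u:{a..b}|lborel. c * exp (-c * u)) = (- exp (-c * b)) - (- exp (-c * a))"
    unfolding set_lebesgue_integral_def
  proof (rule integral_FTC_atLeastAtMost[OF assms])
    fix u
    have "((\<lambda>u. - exp (-c * u)) has_real_derivative c * exp (-c * u)) (at u within {a..b})"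
      by (auto intro!: derivative_eq_intros)
    then show "((\<lambda>u. - exp (-c * u)) has_vector_derivative c * exp (-c * u)) (at u within {a..b})"
      by (simp add: has_real_derivative_iff_has_vector_derivative)
  qed (intro continuous_intros)
  then show ?thesis by simp
qed

lemma exp_neg_diff_bounds:
  fixes c v x :: real
  assumes "c > 0" and "0 \<le> v" and "v \<le> x"
  shows "0 \<le> exp (-c * v) - exp (-c * x)" and "exp (-c * v) - exp (-c * x) \<le> 1"
proof -
  have "exp (-c * x) \<le> exp (-c * v)" and "exp (-c * v) \<le> 1"
    using assms by (auto intro: mult_left_mono)
  moreover have "0 < exp (-c * x)" by simp
  ultimately show "0 \<le> exp (-c * v) - exp (-c * x)" and "exp (-c * v) - exp (-c * x) \<le> 1"
    by linarith+
qed

lemma set_integral_exp_neg_mult_indefinite_integral: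
  fixes g :: "real \<Rightarrow> real" and c x :: real
  assumes c: "c > 0"
    and [measurable]: "g \<in> borel_measurable lborel"
    and g: "set_integrable lborel {0..x} g"
  shows "(LINT u:{0..x}|lborel. c * exp (-c * u) * (LINT v:{0..u}|lborel. g v))
        = (LINT v:{0..x}|lborel. g v * (exp (-c * v) - exp (-c * x)))"
proof -
  define F where "F h v u = indicator {0..x} v * h v * (indicator {v..x} u * (c * exp (-c * u)))"
    for h :: "real \<Rightarrow> real" and v u :: real
  have F_integrable: "integrable lborel (F h v)" for h v
  proof -
    have "continuous_on {v..x} (\<lambda>u. c * exp (-c * u))" by (intro continuous_intros)
    from borel_integrable_compact[OF compact_Icc this]
    have "integrable lborel (\<lambda>u. indicator {v..x} u * (c * exp (-c * u)))" by simp
    then show ?thesis unfolding F_def by simp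
  qed
  have integral_F_u: "(\<integral>u. F h v u \<partial>lborel) = indicator {0..x} v * h v * (exp (-c * v) - exp (-c * x))"
    for h v
  proof (cases "v \<in> {0..x}")
    case True
    then have "(\<integral>u. indicator {v..x} u * (c * exp (-c * u)) \<partial>lborel) = exp (-c * v) - exp (-c * x)"
      using set_integral_exp_neg[of v x c] by (simp add: set_lebesgue_integral_def mult.left_commute)
    then show ?thesis by (simp add: F_def)
  qed (simp add: F_def)
  have integral_F_v: "(\<integral>v. F g v u \<partial>lborel)
      = indicator {0..x} u * (c * exp (-c * u)) * (LINT v:{0..u}|lborel. g v)" for u
  proof -
    have "F g v u = indicator {0..x} u * (c * exp (-c * u)) * (indicator {0..u} v * g v)" for v
      unfolding F_def by (auto split: split_indicator)
    then show ?thesis by (simp add: set_lebesgue_integral_def)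
  qed
  have "integrable (lborel \<Otimes>\<^sub>M lborel) (case_prod (F g))"
  proof (rule lborel_pair.Fubini_integrable)
    have [measurable]: "g \<in> borel_measurable borel" by simp
    have "case_prod (F g)
        = (\<lambda>p. if 0 \<le> fst p \<and> fst p \<le> x \<and> fst p \<le> snd p \<and> snd p \<le> x
               then g (fst p) * (c * exp (-c * snd p)) else 0)"
      by (auto simp: F_def fun_eq_iff split: split_indicator)
    also have "\<dots> \<in> borel_measurable (borel \<Otimes>\<^sub>M borel)"
      by measurable
    finally show "case_prod (F g) \<in> borel_measurable (lborel \<Otimes>\<^sub>M lborel)"
      by (simp add: lborel_prod borel_prod)
    have "norm (F g v u) = F (\<lambda>v. \<bar>g v\<bar>) v u" for v u
      unfolding F_def using c by (auto simp: abs_mult split: split_indicator)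
    then have "(\<lambda>v. \<integral>u. norm (F g v u) \<partial>lborel)
        = (\<lambda>v. indicator {0..x} v * \<bar>g v\<bar> * (exp (-c * v) - exp (-c * x)))"
      by (simp add: integral_F_u)
    moreover have "set_integrable lborel {0..x} (\<lambda>v. \<bar>g v\<bar> * (exp (-c * v) - exp (-c * x)))"
    proof (rule set_integrable_bound[OF g])
      show "set_borel_measurable lborel {0..x} (\<lambda>v. \<bar>g v\<bar> * (exp (-c * v) - exp (-c * x)))"
        unfolding set_borel_measurable_def by measurable
      have "\<bar>g v\<bar> * (exp (-c * v) - exp (-c * x)) \<le> \<bar>g v\<bar>" if "v \<in> {0..x}" for v
        using exp_neg_diff_bounds[OF c, of v x] that by (intro mult_left_le) auto
      then show "AE v in lborel. v \<in> {0..x} \<longrightarrow>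
          norm (\<bar>g v\<bar> * (exp (-c * v) - exp (-c * x))) \<le> norm (g v)"
        using exp_neg_diff_bounds[OF c] by (intro AE_I2) (auto simp: abs_mult)
    qed
    ultimately show "integrable lborel (\<lambda>v. \<integral>u. norm (case (v, u) of (v, u) \<Rightarrow> F g v u) \<partial>lborel)"
      by (simp add: set_integrable_def mult.assoc)
  qed (simp add: F_integrable)
  then have "(\<integral>u. (\<integral>v. F g v u \<partial>lborel) \<partial>lborel) = (\<integral>v. (\<integral>u. F g v u \<partial>lborel) \<partial>lborel)"
    by (simp add: lborel_pair.Fubini_integral)
  then show ?thesis
    unfolding integral_F_u integral_F_v set_lebesgue_integral_def by (simp add: mult_ac)
qed

lemma continuous_on_Icc_if_indefinite_integral:
  fixes g r :: "real \<Rightarrow> real"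
  assumes g: "set_integrable lborel {0..x} g"
    and r: "\<forall>u\<in>{0..x}. r u = r 0 + (LINT v:{0..u}|lborel. g v)"
  shows "continuous_on {0..x} r"
proof -
  have r': "r u = r 0 + integral {0..u} g" if "u \<in> {0..x}" for u
  proof -
    have "set_integrable lborel {0..u} g"
      by (rule set_integrable_subset[OF g]) (use that in auto)
    then have "(LINT v:{0..u}|lborel. g v) = integral {0..u} g"
      by (rule set_borel_integral_eq_integral(2))
    moreover have "r u = r 0 + (LINT v:{0..u}|lborel. g v)"
      using r that by blast
    ultimately show ?thesis by simp
  qed
  have "continuous_on {0..x} (\<lambda>u. r 0 + integral {0..u} g)"
    using set_borel_integral_eq_integral(1)[OF g]
    by (intro continuous_intros indefinite_integral_continuous_1)
  then show ?thesis
    by (rule continuous_on_eq) (rule r'[symmetric])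
qed

lemma exp_neg_integration_by_parts:
  fixes g r :: "real \<Rightarrow> real" and c x :: real
  assumes c: "c > 0" and x: "0 \<le> x"
    and [measurable]: "g \<in> borel_measurable lborel"
    and g: "set_integrable lborel {0..x} g"
    and r: "\<forall>u\<in>{0..x}. r u = r 0 + (LINT v:{0..u}|lborel. g v)"
  shows "set_integrable lborel {0..x} (\<lambda>u. exp (-c * u) * (g u - c * r u))"
    and "(LINT u:{0..x}|lborel. exp (-c * u) * (g u - c * r u)) = exp (-c * x) * r x - r 0"
proof -
  have rx: "r x - r 0 = (LINT v:{0..x}|lborel. g v)"
    using bspec[OF r, of x] x by simp
  have eg: "set_integrable lborel {0..x} (\<lambda>u. exp (-c * u) * g u)"
  proof (rule set_integrable_bound[OF g])
    show "set_borel_measurable lborel {0..x} (\<lambda>u. exp (-c * u) * g u)"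
      unfolding set_borel_measurable_def by measurable
    show "AE u in lborel. u \<in> {0..x} \<longrightarrow> norm (exp (-c * u) * g u) \<le> norm (g u)"
      using c by (intro AE_I2) (auto simp: abs_mult mult_left_le_one_le)
  qed
  have er: "set_integrable lborel {0..x} (\<lambda>u. exp (-c * u) * r u)"
    unfolding set_integrable_def
    by (rule borel_integrable_compact)
      (auto intro!: continuous_intros continuous_on_Icc_if_indefinite_integral[OF g r])
  have ce: "set_integrable lborel {0..x} (\<lambda>u. c * exp (-c * u))"
    by (intro borel_integrable_atLeastAtMost' continuous_intros)
  show "set_integrable lborel {0..x} (\<lambda>u. exp (-c * u) * (g u - c * r u))"
    using set_integral_diff(1)[OF eg set_integrable_mult_right[OF er, of c]]
    by (simp add: algebra_simps)
  have "c * (LINT u:{0..x}|lborel. exp (-c * u) * r u) - r 0 * (1 - exp (-c * x))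
      = (LINT u:{0..x}|lborel. c * (exp (-c * u) * r u) - r 0 * (c * exp (-c * u)))"
    using set_integral_diff(2)[OF set_integrable_mult_right[OF er] set_integrable_mult_right[OF ce]]
      set_integral_exp_neg[OF x, of c]
    by simp
  also have "\<dots> = (LINT u:{0..x}|lborel. c * exp (-c * u) * (LINT v:{0..u}|lborel. g v))"
  proof (rule set_lebesgue_integral_cong[rule_format])
    fix u assume "u \<in> {0..x}"
    then have "r u - r 0 = (LINT v:{0..u}|lborel. g v)"
      using bspec[OF r, of u] by simp
    then show "c * (exp (-c * u) * r u) - r 0 * (c * exp (-c * u))
        = c * exp (-c * u) * (LINT v:{0..u}|lborel. g v)"
      by (simp add: algebra_simps)
  qed simp
  also have "\<dots> = (LINT v:{0..x}|lborel. g v * (exp (-c * v) - exp (-c * x)))"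
    by (rule set_integral_exp_neg_mult_indefinite_integral[OF c _ g]) simp
  also have "\<dots> = (LINT u:{0..x}|lborel. exp (-c * u) * g u - exp (-c * x) * g u)"
    by (rule set_lebesgue_integral_cong) (auto simp: algebra_simps)
  also have "\<dots> = (LINT u:{0..x}|lborel. exp (-c * u) * g u) - exp (-c * x) * (r x - r 0)"
    using set_integral_diff(2)[OF eg set_integrable_mult_right[OF g]] rx by simp
  finally have parts: "c * (LINT u:{0..x}|lborel. exp (-c * u) * r u) - r 0 * (1 - exp (-c * x))
      = (LINT u:{0..x}|lborel. exp (-c * u) * g u) - exp (-c * x) * (r x - r 0)" .
  have "(LINT u:{0..x}|lborel. exp (-c * u) * (g u - c * r u))
      = (LINT u:{0..x}|lborel. exp (-c * u) * g u - c * (exp (-c * u) * r u))"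
    by (rule set_lebesgue_integral_cong) (auto simp: algebra_simps)
  also have "\<dots> = (LINT u:{0..x}|lborel. exp (-c * u) * g u) - c * (LINT u:{0..x}|lborel. exp (-c * u) * r u)"
    using set_integral_diff(2)[OF eg set_integrable_mult_right[OF er]] by simp
  also have "\<dots> = exp (-c * x) * r x - r 0"
    using parts by (simp add: algebra_simps)
  finally show "(LINT u:{0..x}|lborel. exp (-c * u) * (g u - c * r u)) = exp (-c * x) * r x - r 0" .
qed

lemma completing_square_le:
  fixes d e l q :: real
  assumes "d > 0"
  shows "- l * (e * q) - l^2 / 2 * (e^2 * d) \<le> q^2 / d / 2"
proof -
  have "q^2 / d / 2 - (- l * (e * q) - l^2 / 2 * (e^2 * d)) = (q + l * d * e)^2 / (2 * d)"
    using assms by (simp add: field_simps power2_eq_square)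
  moreover have "0 \<le> (q + l * d * e)^2 / (2 * d)"
    using assms by simp
  ultimately show ?thesis by linarith
qed

lemma action_ge_boundary_term:
  fixes lam T c x :: real and D g r :: "real \<Rightarrow> real"
  assumes c: "c = lam * T" "c > 0" and x: "0 \<le> x"
    and D: "continuous_on {0..x} D" "\<And>u. D u > 0"
    and H: "H1_on x r g"
  shows "ennreal ((r 0 - exp (-c * x) * r x)^2 / (2 * (LINT u:{0..x}|lborel. exp (-2 * c * u) * D u)))
          \<le> action lam T D {0..x} r g"
proof -
  from H have [measurable]: "g \<in> borel_measurable lborel"
    and g2: "set_integrable lborel {0..x} (\<lambda>u. (g u)^2)"
    and r: "\<forall>u\<in>{0..x}. r u = r 0 + (LINT v:{0..u}|lborel. g v)"
    unfolding H1_on_def by blast+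
  have g: "set_integrable lborel {0..x} g"
    by (rule set_integrable_Icc_if_square_integrable[OF _ g2]) simp
  define S where "S = r 0 - exp (-c * x) * r x"
  define W where "W = (LINT u:{0..x}|lborel. exp (-2 * c * u) * D u)"
  define q where "q u = g u - c * r u" for u
  have eq: "set_integrable lborel {0..x} (\<lambda>u. exp (-c * u) * q u)"
    and eq_integral: "(LINT u:{0..x}|lborel. exp (-c * u) * q u) = - S"
    using exp_neg_integration_by_parts[OF c(2) x _ g r] unfolding q_def S_def by simp_all
  have w: "set_integrable lborel {0..x} (\<lambda>u. exp (-2 * c * u) * D u)"
    by (intro borel_integrable_atLeastAtMost' continuous_intros D)
  show ?thesis
  proof (cases "W > 0")
    case False
    then have "S^2 / (2 * W) \<le> 0" by (intro divide_nonneg_nonpos) auto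
    then show ?thesis by (simp add: S_def W_def ennreal_neg)
  next
    case True
    \<comment> \<open>Integrate the pointwise bound completing_square_le over [0, x] and choose l = S / W.\<close>
    define l where "l = S / W"
    define h where "h u = - l * (exp (-c * u) * q u) - l^2 / 2 * (exp (-2 * c * u) * D u)" for u
    have h_le: "h u \<le> (q u)^2 / D u / 2" for u
    proof -
      have "exp (-2 * c * u) = (exp (-c * u))^2"
        by (simp add: power2_eq_square flip: exp_add)
      then show ?thesis
        unfolding h_def using completing_square_le[OF D(2)] by simp
    qed
    have h: "set_integrable lborel {0..x} h"
      unfolding h_def using eq w by (intro set_integral_diff(1) set_integrable_mult_right)
    have "(LINT u:{0..x}|lborel. h u) = - l * (- S) - l^2 / 2 * W"
      unfolding h_def W_def
      using set_integral_diff(2)[OF set_integrable_mult_right[OF eq, of "- l"] set_integrable_mult_right[OF w, of "l^2 / 2"]]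
      by (simp only: set_integral_mult_right eq_integral)
    also have "\<dots> = S^2 / (2 * W)"
      unfolding l_def using True by (simp add: field_simps power2_eq_square)
    finally have "ennreal (S^2 / (2 * W)) = ennreal (\<integral>u. indicator {0..x} u * h u \<partial>lborel)"
      by (simp add: set_lebesgue_integral_def)
    also have "\<dots> \<le> (\<integral>\<^sup>+u. ennreal (indicator {0..x} u * h u) \<partial>lborel)"
      using h by (intro nn_integral_ge_integral) (simp add: set_integrable_def)
    also have "\<dots> \<le> (\<integral>\<^sup>+u. ennreal ((q u)^2 / D u / 2) * indicator {0..x} u \<partial>lborel)"
      using h_le by (intro nn_integral_mono) (auto split: split_indicator intro: ennreal_leI)
    finally show ?thesis
      by (simp add: action_def S_def W_def q_def c(1))
  qed
qed

definition weight_integral :: "real \<Rightarrow> (real \<Rightarrow> real) \<Rightarrow> real \<Rightarrow> real" where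
  "weight_integral c D x = (LBINT y=(0::real)..x. exp (-2 * c * y) * D y)"

text \<open>For 1-periodic D the integral over [0, \<infinity>) is a geometric series over the periods.\<close>
definition weight_total :: "real \<Rightarrow> (real \<Rightarrow> real) \<Rightarrow> real" where
  "weight_total c D = weight_integral c D 1 / (1 - exp (-2 * c))"

definition weight_tail :: "real \<Rightarrow> (real \<Rightarrow> real) \<Rightarrow> real \<Rightarrow> real" where
  "weight_tail c D x = weight_total c D - weight_integral c D x"

text \<open>The minimiser: r' = c r + D p with momentum p = - (\<delta> / M) exp (- c u), which solves p' = - c p;
  it starts at \<delta> and vanishes where the weight integral reaches M.\<close>
definition optimal_path :: "real \<Rightarrow> (real \<Rightarrow> real) \<Rightarrow> real \<Rightarrow> real \<Rightarrow> real \<Rightarrow> real" where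
  "optimal_path c D \<delta> M u = \<delta> * exp (c * u) * (1 - weight_integral c D u / M)"

definition optimal_path_deriv :: "real \<Rightarrow> (real \<Rightarrow> real) \<Rightarrow> real \<Rightarrow> real \<Rightarrow> real \<Rightarrow> real" where
  "optimal_path_deriv c D \<delta> M u = c * optimal_path c D \<delta> M u - \<delta> / M * exp (-c * u) * D u"

locale periodic_weight =
  fixes c :: real and D :: "real \<Rightarrow> real"
  assumes c_pos: "c > 0"
    and D_continuous: "continuous_on UNIV D"
    and D_periodic: "\<And>x. D (x + 1) = D x"
    and D_pos: "\<And>x. D x > 0"
begin

abbreviation "G \<equiv> weight_integral c D"
abbreviation "K \<equiv> weight_total c D"
abbreviation "tail \<equiv> weight_tail c D"

lemma weight_continuous: "continuous_on A (\<lambda>u. exp (-2 * c * u) * D u)"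
  by (intro continuous_intros continuous_on_subset[OF D_continuous]) simp

lemma weight_pos: "exp (-2 * c * u) * D u > 0"
  using D_pos by simp

lemma exp_neg_2c: "0 < exp (-2 * c)" "exp (-2 * c) < 1"
  using c_pos by auto

lemma G_has_derivative: "(G has_real_derivative exp (-2 * c * x) * D x) (at x)"
proof -
  have "((\<lambda>u. LBINT y=(0::real)..u. exp (-2 * c * y) * D y) has_vector_derivative exp (-2 * c * x) * D x)
      (at x within {-\<bar>x\<bar>-1..\<bar>x\<bar>+1})"
  proof (rule interval_integral_FTC2)
    show "continuous_on {-\<bar>x\<bar>-1..\<bar>x\<bar>+1} (\<lambda>y. exp (-2 * c * y) * D y)"
      by (rule weight_continuous)
  qed auto
  moreover have "at x within {-\<bar>x\<bar>-1..\<bar>x\<bar>+1} = at x"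
    by (rule at_within_Icc_at) auto
  ultimately show ?thesis
    by (simp add: has_real_derivative_iff_has_vector_derivative weight_integral_def[abs_def])
qed

lemma G_0 [simp]: "G 0 = 0"
  by (simp add: weight_integral_def)

lemma G_eq_set_integral: "0 \<le> x \<Longrightarrow> G x = (LINT u:{0..x}|lborel. exp (-2 * c * u) * D u)"
  by (simp add: weight_integral_def interval_integral_Icc)

lemma G_less: "x < y \<Longrightarrow> G x < G y"
  by (rule DERIV_pos_imp_increasing[of x y G]) (use G_has_derivative weight_pos in blast)+

lemma G_le: "x \<le> y \<Longrightarrow> G x \<le> G y"
  using G_less by (cases "x = y") (auto simp: less_imp_le)

lemma G_pos: "x > 0 \<Longrightarrow> G x > 0"
  using G_less[of 0 x] by simp

lemma G_shift: "G (x + 1) = G 1 + exp (-2 * c) * G x"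
proof -
  have "((\<lambda>x. G (x + 1) - exp (-2 * c) * G x) has_real_derivative 0) (at x)" for x
  proof -
    have "((\<lambda>x. G (x + 1) - exp (-2 * c) * G x) has_real_derivative
        exp (-2 * c * (x + 1)) * D (x + 1) - exp (-2 * c) * (exp (-2 * c * x) * D x)) (at x)"
      by (auto intro!: derivative_eq_intros DERIV_chain2[OF G_has_derivative] G_has_derivative)
    moreover have "exp (-2 * c * (x + 1)) * D (x + 1) = exp (-2 * c) * (exp (-2 * c * x) * D x)"
      using D_periodic[of x] by (simp add: algebra_simps flip: exp_add)
    ultimately show ?thesis by simp
  qed
  then have "G (x + 1) - exp (-2 * c) * G x = G (0 + 1) - exp (-2 * c) * G 0"
    by (intro DERIV_isconst_all allI)
  then show ?thesis by simp
qed

lemma K_pos: "K > 0"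
  using G_pos[of 1] exp_neg_2c by (simp add: weight_total_def)

lemma tail_eq: "tail x = (G (x + 1) - G x) / (1 - exp (-2 * c))"
  using G_shift[of x] exp_neg_2c by (simp add: weight_tail_def weight_total_def field_simps)

lemma tail_pos: "tail x > 0"
  using G_less[of x "x + 1"] exp_neg_2c by (simp add: tail_eq)

lemma tail_0: "tail 0 = K"
  by (simp add: weight_tail_def)

lemma tail_shift: "tail (x + 1) = exp (-2 * c) * tail x"
  using G_shift[of x] exp_neg_2c by (simp add: weight_tail_def weight_total_def field_simps)

lemma tail_has_derivative: "(tail has_real_derivative - (exp (-2 * c * x) * D x)) (at x)"
  unfolding weight_tail_def[abs_def] by (auto intro!: derivative_eq_intros G_has_derivative)

lemma tail_le_exp_neg: "0 \<le> x \<Longrightarrow> tail x \<le> K * exp (2 * c) * exp (-2 * c * x)"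
proof -
  assume x: "0 \<le> x"
  have shift: "tail (y + real n) = exp (-2 * c) ^ n * tail y" for y n
  proof (induction n)
    case (Suc n)
    have "tail (y + real (Suc n)) = exp (-2 * c) * tail (y + real n)"
      using tail_shift[of "y + real n"] by (simp add: ac_simps)
    then show ?case
      using Suc by simp
  qed simp
  define n where "n = nat \<lfloor>x\<rfloor>"
  have n: "real n \<le> x" "x < real n + 1"
    unfolding n_def using x by linarith+
  have "tail x = exp (-2 * c) ^ n * tail (x - real n)"
    using shift[of "x - real n" n] by simp
  also have "\<dots> \<le> exp (-2 * c) ^ n * K"
    using n(1) G_le[of 0 "x - real n"] by (intro mult_left_mono) (simp_all add: weight_tail_def)
  also have "exp (-2 * c) ^ n = exp (-2 * c * real n)"
    by (simp add: exp_of_nat_mult[symmetric] mult_ac)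
  also have "\<dots> \<le> exp (2 * c) * exp (-2 * c * x)"
  proof -
    have "2 * c * x \<le> 2 * c * (real n + 1)"
      using n(2) c_pos by (intro mult_left_mono) auto
    then show ?thesis
      by (simp add: algebra_simps flip: exp_add)
  qed
  finally show ?thesis
    using K_pos by (simp add: mult_ac mult_right_mono)
qed

lemma tail_tendsto_0: "(tail \<longlongrightarrow> 0) at_top"
proof (rule tendsto_0_if_exp_neg_bound)
  show "\<forall>\<^sub>F x in at_top. 0 \<le> tail x \<and> tail x \<le> K * exp (2 * c) * exp (- (2 * c) * x)"
    using eventually_ge_at_top[of 0]
    by eventually_elim (use tail_pos tail_le_exp_neg in \<open>auto intro: less_imp_le\<close>)
qed (use c_pos in simp)

lemma exp_mult_tail_tendsto_0: "((\<lambda>x. exp (c * x) * tail x) \<longlongrightarrow> 0) at_top"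
proof (rule tendsto_0_if_exp_neg_bound)
  have bound: "exp (c * x) * tail x \<le> K * exp (2 * c) * exp (- c * x)" if "0 \<le> x" for x
  proof -
    have "exp (c * x) * tail x \<le> exp (c * x) * (K * exp (2 * c) * exp (-2 * c * x))"
      using tail_le_exp_neg[OF that] by (intro mult_left_mono) auto
    also have "\<dots> = K * exp (2 * c) * exp (- c * x)"
      by (simp add: algebra_simps flip: exp_add)
    finally show ?thesis .
  qed
  show "\<forall>\<^sub>F x in at_top. 0 \<le> exp (c * x) * tail x \<and> exp (c * x) * tail x \<le> K * exp (2 * c) * exp (- c * x)"
    using eventually_ge_at_top[of 0]
    by eventually_elim (use bound tail_pos in \<open>auto intro: less_imp_le\<close>)
qed (use c_pos in simp)

lemma hper_eq_tail:
  assumes "c = lam * T"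
  shows "hper lam T D x = exp (2 * c * x) * tail x"
proof -
  have "((\<lambda>u. exp (-2 * c * u) * D u) has_integral (G (x + 1) - G x)) {x..x + 1}"
  proof (rule fundamental_theorem_of_calculus)
    show "(G has_vector_derivative exp (-2 * c * u) * D u) (at u within {x..x + 1})" for u
      using G_has_derivative
      by (simp add: has_real_derivative_iff_has_vector_derivative[symmetric] has_field_derivative_at_within)
  qed simp
  moreover have "hper lam T D x
      = exp (2 * c * x) / (1 - exp (-2 * c)) * integral {x..x + 1} (\<lambda>u. exp (-2 * c * u) * D u)"
    unfolding hper_def assms by (simp add: mult.assoc)
  ultimately show ?thesis
    by (simp add: integral_unique tail_eq)
qed

lemma optimal_path_has_derivative:
  "(optimal_path c D \<delta> M has_real_derivative optimal_path_deriv c D \<delta> M u) (at u)"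
proof -
  have "((\<lambda>u. \<delta> * exp (c * u)) has_real_derivative \<delta> * (exp (c * u) * c)) (at u)"
    by (auto intro!: derivative_eq_intros)
  moreover have "((\<lambda>u. 1 - G u / M) has_real_derivative 0 - exp (-2 * c * u) * D u / M) (at u)"
    by (intro DERIV_diff DERIV_const DERIV_cdivide G_has_derivative)
  ultimately have "(optimal_path c D \<delta> M has_real_derivative
      \<delta> * (exp (c * u) * c) * (1 - G u / M) + (0 - exp (-2 * c * u) * D u / M) * (\<delta> * exp (c * u))) (at u)"
    unfolding optimal_path_def[abs_def] by (rule DERIV_mult)
  moreover have "exp (c * u) * exp (-2 * c * u) = exp (- c * u)"
    by (simp flip: exp_add)
  ultimately show ?thesis
    by (simp add: optimal_path_deriv_def optimal_path_def algebra_simps)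
qed

lemma optimal_path_0 [simp]: "optimal_path c D \<delta> M 0 = \<delta>"
  by (simp add: optimal_path_def)

lemma optimal_path_H1_loc: "H1_loc (optimal_path c D \<delta> M) (optimal_path_deriv c D \<delta> M)"
proof (rule H1_loc_if_continuous_derivative[OF optimal_path_has_derivative])
  have "continuous_on UNIV (optimal_path c D \<delta> M)"
    using optimal_path_has_derivative by (intro DERIV_continuous_on) (auto intro: has_field_derivative_at_within)
  then show "continuous_on UNIV (optimal_path_deriv c D \<delta> M)"
    unfolding optimal_path_deriv_def[abs_def] by (intro continuous_intros D_continuous)
qed

lemma optimal_path_action_density:
  "(optimal_path_deriv c D \<delta> M u - c * optimal_path c D \<delta> M u)^2 / D u / 2
    = \<delta>^2 / (2 * M^2) * (exp (-2 * c * u) * D u)"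
proof -
  have "exp (-2 * c * u) = (exp (- c * u))^2"
    by (simp add: power2_eq_square flip: exp_add)
  then show ?thesis
    using D_pos[of u] by (simp add: optimal_path_deriv_def field_simps power2_eq_square)
qed

lemma action_optimal_path:
  assumes "c = lam * T"
  shows "action lam T D A (optimal_path c D \<delta> M) (optimal_path_deriv c D \<delta> M)
    = (\<integral>\<^sup>+u. ennreal (\<delta>^2 / (2 * M^2) * (exp (-2 * c * u) * D u)) * indicator A u \<partial>lborel)"
  unfolding action_def assms[symmetric] optimal_path_action_density ..

lemma scaled_weight_nonneg: "0 \<le> \<delta>^2 / (2 * M^2) * (exp (-2 * c * u) * D u)"
  using weight_pos[of u] by simp

lemma scaled_weight_measurable: "(\<lambda>u. k * (exp (-2 * c * u) * D u)) \<in> borel_measurable borel"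
  by (intro borel_measurable_continuous_onI continuous_intros D_continuous)

lemma action_optimal_path_Icc:
  assumes "c = lam * T" and "0 \<le> x"
  shows "action lam T D {0..x} (optimal_path c D \<delta> M) (optimal_path_deriv c D \<delta> M)
    = ennreal (\<delta>^2 / (2 * M^2) * G x)"
proof -
  have "(\<integral>\<^sup>+u. ennreal (\<delta>^2 / (2 * M^2) * (exp (-2 * c * u) * D u)) * indicator {0..x} u \<partial>lborel)
      = ennreal (\<delta>^2 / (2 * M^2) * G x - \<delta>^2 / (2 * M^2) * G 0)"
    by (rule nn_integral_FTC_Icc[OF scaled_weight_measurable _ scaled_weight_nonneg assms(2)])
      (intro DERIV_cmult G_has_derivative)
  then show ?thesis
    by (simp add: action_optimal_path[OF assms(1)])
qed

lemma action_optimal_path_atLeast: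
  assumes "c = lam * T"
  shows "action lam T D {0..} (optimal_path c D \<delta> M) (optimal_path_deriv c D \<delta> M)
    = ennreal (\<delta>^2 / (2 * M^2) * K)"
proof -
  have "(\<integral>\<^sup>+u. ennreal (\<delta>^2 / (2 * M^2) * (exp (-2 * c * u) * D u)) * indicator {0..} u \<partial>lborel)
      = ennreal (0 - (- (\<delta>^2 / (2 * M^2)) * tail 0))"
  proof (rule nn_integral_FTC_atLeast[OF scaled_weight_measurable _ scaled_weight_nonneg])
    show "((\<lambda>u. - (\<delta>^2 / (2 * M^2)) * tail u) has_real_derivative
        \<delta>^2 / (2 * M^2) * (exp (-2 * c * u) * D u)) (at u)" for u
      using DERIV_cmult[OF tail_has_derivative, of "- (\<delta>^2 / (2 * M^2))" u] by simp
    show "((\<lambda>u. - (\<delta>^2 / (2 * M^2)) * tail u) \<longlongrightarrow> 0) at_top"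
      using tendsto_mult_left[OF tail_tendsto_0, of "- (\<delta>^2 / (2 * M^2))"] by simp
  qed
  then show ?thesis
    by (simp add: action_optimal_path[OF assms] tail_0)
qed

lemma G_tendsto_total: "(G \<longlongrightarrow> K) at_top"
proof -
  have "((\<lambda>x. K - tail x) \<longlongrightarrow> K - 0) at_top"
    by (intro tendsto_intros tail_tendsto_0)
  then show ?thesis
    by (simp add: weight_tail_def)
qed

lemma I0_fin_eq:
  assumes c: "c = lam * T" and \<phi>: "\<phi> > 0"
  shows "I0_fin lam T D \<delta> \<phi> = ennreal (\<delta>^2 / (2 * G \<phi>))"
proof (rule antisym)
  let ?r = "optimal_path c D \<delta> (G \<phi>)" and ?g = "optimal_path_deriv c D \<delta> (G \<phi>)"
  have "(?r, ?g) \<in> {(r, g). H1_on \<phi> r g \<and> r 0 = \<delta> \<and> r \<phi> = 0}"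
    using \<phi> G_pos[OF \<phi>] by (simp add: H1_on_if_H1_loc optimal_path_H1_loc optimal_path_def)
  then have "I0_fin lam T D \<delta> \<phi> \<le> action lam T D {0..\<phi>} ?r ?g"
    unfolding I0_fin_def by (rule INF_lower2) simp
  also have "\<dots> = ennreal (\<delta>^2 / (2 * (G \<phi>)^2) * G \<phi>)"
    using \<phi> by (intro action_optimal_path_Icc c) simp
  also have "\<delta>^2 / (2 * (G \<phi>)^2) * G \<phi> = \<delta>^2 / (2 * G \<phi>)"
    using G_pos[OF \<phi>] by (simp add: power2_eq_square)
  finally show "I0_fin lam T D \<delta> \<phi> \<le> ennreal (\<delta>^2 / (2 * G \<phi>))" .
  show "ennreal (\<delta>^2 / (2 * G \<phi>)) \<le> I0_fin lam T D \<delta> \<phi>"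
    unfolding I0_fin_def
  proof (rule INF_greatest, clarsimp)
    fix r g assume "H1_on \<phi> r g" "\<delta> = r 0" "r \<phi> = 0"
    then show "ennreal ((r 0)^2 / (2 * G \<phi>)) \<le> action lam T D {0..\<phi>} r g"
      using action_ge_boundary_term[OF c c_pos _ continuous_on_subset[OF D_continuous] D_pos, of \<phi> r g] \<phi>
      by (simp add: G_eq_set_integral)
  qed
qed

lemma I0_inf_eq:
  assumes c: "c = lam * T"
  shows "I0_inf lam T D \<delta> = ennreal (\<delta>^2 / (2 * K))"
proof (rule antisym)
  let ?r = "optimal_path c D \<delta> K" and ?g = "optimal_path_deriv c D \<delta> K"
  have "?r = (\<lambda>u. \<delta> / K * (exp (c * u) * tail u))"
    using K_pos by (auto simp: optimal_path_def weight_tail_def field_simps)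
  then have "(?r \<longlongrightarrow> 0) at_top"
    using tendsto_mult_left[OF exp_mult_tail_tendsto_0, of "\<delta> / K"] by simp
  then have "(?r, ?g) \<in> {(r, g). H1_loc r g \<and> r 0 = \<delta> \<and> (r \<longlongrightarrow> 0) at_top}"
    by (simp add: optimal_path_H1_loc)
  then have "I0_inf lam T D \<delta> \<le> action lam T D {0..} ?r ?g"
    unfolding I0_inf_def by (rule INF_lower2) simp
  also have "\<dots> = ennreal (\<delta>^2 / (2 * K^2) * K)"
    by (rule action_optimal_path_atLeast[OF c])
  also have "\<delta>^2 / (2 * K^2) * K = \<delta>^2 / (2 * K)"
    using K_pos by (simp add: power2_eq_square)
  finally show "I0_inf lam T D \<delta> \<le> ennreal (\<delta>^2 / (2 * K))" .
  show "ennreal (\<delta>^2 / (2 * K)) \<le> I0_inf lam T D \<delta>"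
    unfolding I0_inf_def
  proof (rule INF_greatest, clarsimp)
    fix r g assume H: "H1_loc r g" and "\<delta> = r 0" and r: "(r \<longlongrightarrow> 0) at_top"
    \<comment> \<open>Bound the action below by its restriction to [0, x] and let x tend to infinity.\<close>
    define f where "f x = (r 0 - exp (-c * x) * r x)^2 / (2 * G x)" for x
    have "((\<lambda>x. ennreal (f x)) \<longlongrightarrow> ennreal ((r 0 - 0 * 0)^2 / (2 * K))) at_top"
      unfolding f_def
      by (intro tendsto_ennrealI tendsto_intros r G_tendsto_total tendsto_exp_neg_mult_at_top)
        (use c_pos K_pos in auto)
    moreover have "ennreal (f x) \<le> action lam T D {0..} r g" if "0 \<le> x" for x
    proof -
      have "ennreal (f x) \<le> action lam T D {0..x} r g"
        using action_ge_boundary_term[OF c c_pos that continuous_on_subset[OF D_continuous] D_pos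
            H1_on_if_H1_loc[OF that H]]
        by (simp add: f_def G_eq_set_integral[OF that])
      also have "\<dots> \<le> action lam T D {0..} r g"
        unfolding action_def by (intro nn_integral_mono) (auto split: split_indicator)
      finally show ?thesis .
    qed
    ultimately show "ennreal ((r 0)^2 / (2 * K)) \<le> action lam T D {0..} r g"
      by (intro tendsto_le[OF trivial_limit_at_top_linorder tendsto_const])
        (auto intro: eventually_mono[OF eventually_ge_at_top[of 0]])
  qed
qed

lemma tail_div_G_bigo: "(\<lambda>x. tail x / G x) \<in> O[at_top](\<lambda>x. exp (-2 * c * x))"
proof (rule bigoI)
  show "\<forall>\<^sub>F x in at_top. norm (tail x / G x) \<le> K * exp (2 * c) / G 1 * norm (exp (-2 * c * x))"
    using eventually_ge_at_top[of 1]
  proof eventually_elim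
    case (elim x)
    have "tail x / G x \<le> tail x / G 1"
      using G_le[OF elim] G_pos[of 1] tail_pos[of x] by (intro divide_left_mono) auto
    also have "\<dots> \<le> K * exp (2 * c) * exp (-2 * c * x) / G 1"
      using tail_le_exp_neg[of x] elim G_pos[of 1] by (intro divide_right_mono) auto
    finally show ?case
      using tail_pos[of x] G_pos[of x] elim by simp
  qed
qed

lemma value_gap_eq:
  assumes "G x > 0"
  shows "\<delta>^2 / (2 * G x) - \<delta>^2 / (2 * K) - \<delta>^2 / 2 * tail x / K^2
    = (\<delta>^2 / 2 * tail x / K^2) * (tail x / G x)"
  using assms K_pos unfolding weight_tail_def by (simp add: field_simps power2_eq_square)

lemma value_gap_bigo:
  assumes c: "c = lam * T"
  shows "(\<lambda>\<phi>. enn2real (I0_fin lam T D \<delta> \<phi>) - enn2real (I0_inf lam T D \<delta>) - \<delta>^2 / 2 * tail \<phi> / K^2)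
    \<in> O[at_top](\<lambda>\<phi>. (\<delta>^2 / 2 * tail \<phi> / K^2) * exp (-2 * c * \<phi>))"
proof -
  have "\<forall>\<^sub>F \<phi> in at_top.
      enn2real (I0_fin lam T D \<delta> \<phi>) - enn2real (I0_inf lam T D \<delta>) - \<delta>^2 / 2 * tail \<phi> / K^2
      = (\<delta>^2 / 2 * tail \<phi> / K^2) * (tail \<phi> / G \<phi>)"
    using eventually_gt_at_top[of 0]
  proof eventually_elim
    case (elim \<phi>)
    have "enn2real (I0_fin lam T D \<delta> \<phi>) = \<delta>^2 / (2 * G \<phi>)"
      using I0_fin_eq[OF c elim] G_pos[OF elim] by simp
    moreover have "enn2real (I0_inf lam T D \<delta>) = \<delta>^2 / (2 * K)"
      using I0_inf_eq[OF c] K_pos by simp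
    ultimately show ?case
      using value_gap_eq[OF G_pos[OF elim]] by simp
  qed
  moreover have "(\<lambda>\<phi>. (\<delta>^2 / 2 * tail \<phi> / K^2) * (tail \<phi> / G \<phi>))
      \<in> O[at_top](\<lambda>\<phi>. (\<delta>^2 / 2 * tail \<phi> / K^2) * exp (-2 * c * \<phi>))"
    by (rule landau_o.big.mult_left[OF tail_div_G_bigo])
  ultimately show ?thesis
    by (subst landau_o.big.in_cong)
qed

end

theorem proposition4p1:
  fixes lam T \<delta> :: real and D :: "real \<Rightarrow> real"
  assumes "lam > 0" and "T > 0" and "\<delta> > 0"
    and "continuous_on UNIV D"
    and "\<And>x. D (x + 1) = D x"
    and "\<exists>m>0. \<forall>x. D x \<ge> m"
  shows "I0_inf lam T D \<delta> \<noteq> \<infinity>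
    \<and> (\<forall>\<^sub>F \<phi> in at_top. I0_fin lam T D \<delta> \<phi> \<noteq> \<infinity>)
    \<and> (\<lambda>\<phi>. (enn2real (I0_fin lam T D \<delta> \<phi>) - enn2real (I0_inf lam T D \<delta>))
            - 1/2 * \<delta>^2 * exp (- 2 * lam * T * \<phi>) * hper lam T D \<phi> / (hper lam T D 0)^2)
      \<in> O[at_top](\<lambda>\<phi>. (1/2 * \<delta>^2 * exp (- 2 * lam * T * \<phi>) * hper lam T D \<phi> / (hper lam T D 0)^2)
                        * exp (- 2 * lam * T * \<phi>))"
proof -
  define c where "c = lam * T"
  interpret periodic_weight c D
    using assms by unfold_locales (auto simp: c_def intro: less_le_trans)
  have exp_eq: "exp (- 2 * lam * T * \<phi>) = exp (-2 * c * \<phi>)" for \<phi>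
    by (simp add: c_def mult.assoc)
  have main_eq: "1/2 * \<delta>^2 * exp (-2 * c * \<phi>) * hper lam T D \<phi> / (hper lam T D 0)^2
      = \<delta>^2 / 2 * tail \<phi> / K^2" for \<phi>
    by (simp add: hper_eq_tail[OF c_def] tail_0 mult.assoc flip: exp_add)
  have "I0_inf lam T D \<delta> \<noteq> \<infinity>"
    by (simp add: I0_inf_eq[OF c_def])
  moreover have "\<forall>\<^sub>F \<phi> in at_top. I0_fin lam T D \<delta> \<phi> \<noteq> \<infinity>"
    using eventually_gt_at_top[of 0] by eventually_elim (simp add: I0_fin_eq[OF c_def])
  ultimately show ?thesis
    unfolding exp_eq main_eq using value_gap_bigo[OF c_def] by blast
qed

end
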